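(* Let $A$ be an alphabet of infinite cardinality $\kappa$ and let $S$ be the free semigroup over $A$. Then there exists a finite coloring of $S$ such that for no variable word $w(v)$ over $A$ is the set $\{w(a) : a \in A\}$ monochromatic.
   Context: The free semigroup $S$ over $A$ is the set of nonempty finite words over $A$ with concatenation. Given a symbol $v\notin A$, a variable word is a word over $A\cup\{v\}$ in which $v$ occurs; for $a\in A$, $w(a)$ is obtained by replacing every occurrence of $v$ in $w(v)$ by $a$. *)

theory Defs
  imports Main
begin

definition free_semigroup :: "'a set \<Rightarrow> 'a list set" where
  "free_semigroup A = {s. s \<noteq> [] \<and> set s \<subseteq> A}"

text \<open>Variable words over A: words over A \<union> {v}, where the variable v is encoded as None
  and a letter a of A as Some a; v must occur.\<close>
definition variable_word :: "'a set \<Rightarrow> 'a option list \<Rightarrow> bool" where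
  "variable_word A w \<longleftrightarrow> None \<in> set w \<and> (\<forall>x\<in>set w. x = None \<or> the x \<in> A)"

definition subst_var :: "'a option list \<Rightarrow> 'a \<Rightarrow> 'a list" where
  "subst_var w a = map (\<lambda>x. case x of None \<Rightarrow> a | Some b \<Rightarrow> b) w"

end

theory Submission
  imports Defs
begin

text \<open>Fix an injective sequence g of letters of A and colour a word by the parity of the largest
  n with g n occurring in it. A variable word w contains only finitely many letters, so for all
  large n the letter g n is the last one of the sequence in w(g n), and the colours of
  w(g n) alternate with n.\<close>

lemma set_subst_var:
  "x \<in> set (subst_var w a) \<longleftrightarrow> (None \<in> set w \<and> x = a) \<or> Some x \<in> set w"
  unfolding subst_var_def by (force split: option.splits)

definition max_index_parity :: "(nat \<Rightarrow> 'a) \<Rightarrow> 'a list \<Rightarrow> nat" where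
  "max_index_parity g s = Max {n. g n \<in> set s} mod 2"

lemma max_index_parity_less_2: "max_index_parity g s < 2"
  unfolding max_index_parity_def by simp

lemma max_index_parity_subst_var_eventually:
  assumes "inj g" and "None \<in> set w"
  obtains m where "\<And>n. m \<le> n \<Longrightarrow> max_index_parity g (subst_var w (g n)) = n mod 2"
proof -
  define F where "F = (Some \<circ> g) -` set w"
  have "finite F"
    unfolding F_def by (rule finite_vimageI) (use \<open>inj g\<close> in \<open>auto simp: inj_def\<close>)
  then obtain m where m: "\<forall>k\<in>F. k < m"
    using finite_nat_set_iff_bounded by blast
  have "max_index_parity g (subst_var w (g n)) = n mod 2" if "m \<le> n" for n
  proof -
    have "{k. g k \<in> set (subst_var w (g n))} = insert n F"
      using assms by (auto simp: set_subst_var F_def inj_def)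
    moreover have "Max (insert n F) = n"
      by (rule Max_eqI) (use \<open>finite F\<close> m that in auto)
    ultimately show ?thesis
      unfolding max_index_parity_def by simp
  qed
  then show thesis by (rule that)
qed

lemma subst_var_not_monochromatic:
  assumes "inj g" and "None \<in> set w"
  shows "\<exists>n. max_index_parity g (subst_var w (g n)) \<noteq> col"
proof -
  obtain m where "\<And>n. m \<le> n \<Longrightarrow> max_index_parity g (subst_var w (g n)) = n mod 2"
    using max_index_parity_subst_var_eventually assms by blast
  then have "max_index_parity g (subst_var w (g m)) \<noteq> max_index_parity g (subst_var w (g (Suc m)))"
    by simp presburger
  then show ?thesis by metis
qed

theorem theorem2p10:
  fixes A :: "'a set"
  assumes "infinite A"
  shows "\<exists>(k::nat) (c :: 'a list \<Rightarrow> nat).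
           (\<forall>s\<in>free_semigroup A. c s < k) \<and>
           (\<forall>w. variable_word A w \<longrightarrow>
                \<not> (\<exists>col. \<forall>a\<in>A. c (subst_var w a) = col))"
proof -
  obtain g :: "nat \<Rightarrow> 'a" where g: "inj g" "range g \<subseteq> A"
    using infinite_countable_subset[OF assms] by blast
  have "\<not> (\<exists>col. \<forall>a\<in>A. max_index_parity g (subst_var w a) = col)"
    if "variable_word A w" for w
  proof
    assume "\<exists>col. \<forall>a\<in>A. max_index_parity g (subst_var w a) = col"
    then obtain col where col: "\<forall>a\<in>A. max_index_parity g (subst_var w a) = col" ..
    have "None \<in> set w"
      using that unfolding variable_word_def by blast
    then obtain n where "max_index_parity g (subst_var w (g n)) \<noteq> col"
      using subst_var_not_monochromatic g(1) by blast
    with col g(2) show False by blast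
  qed
  then show ?thesis
    using max_index_parity_less_2 by blast
qed

end
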